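(* Let $p\ge1$. There is a constant $C>0$ depending only on $p$ such that for every $\mu$-complex $X\in\mathbb{R}^{n\times d}$ and every $\beta\in\mathbb{R}^d$, $$f(X\beta)\ge C\,\frac{n}{\mu}\,(1+\ln\mu),$$ i.e. $f(X\beta)=\Omega\!\left(\frac{n}{\mu}(1+\ln\mu)\right)$.
   Context: $\Phi_p(x)=\frac{p^{1-1/p}}{2\Gamma(1/p)}\int_{-\infty}^x \exp(-|t|^p/p)\,dt$, $g(r)=-\ln(\Phi_p(-r))$, and for $X$ with rows $x_i$, $f(X\beta)=\sum_{i=1}^n g(x_i\beta)$. $\mu_p(X)=\sup_{\beta\in\mathbb{R}^d\setminus\{0\}}\frac{\sum_{x_i\beta>0}|x_i\beta|^p}{\sum_{x_i\beta<0}|x_i\beta|^p}$, and $X$ is $\mu$-complex if $\mu_p(X)\le\mu<\infty$. *)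

theory Defs
  imports "HOL-Analysis.Analysis"
begin

text \<open>Data matrix X with n rows and d columns is represented as X :: nat => nat => real,
  entry (i,j) = X i j for i < n, j < d; beta :: nat => real uses coordinates j < d.\<close>

definition rowdot :: "(nat \<Rightarrow> nat \<Rightarrow> real) \<Rightarrow> nat \<Rightarrow> (nat \<Rightarrow> real) \<Rightarrow> nat \<Rightarrow> real" where
  "rowdot X d \<beta> i = (\<Sum>j<d. X i j * \<beta> j)"

definition Phi_p :: "real \<Rightarrow> real \<Rightarrow> real" where
  "Phi_p p x = p powr (1 - 1/p) / (2 * Gamma (1/p)) *
      (LBINT t:{..x}. exp (- (\<bar>t\<bar> powr p) / p))"

definition g_p :: "real \<Rightarrow> real \<Rightarrow> real" where
  "g_p p r = - ln (Phi_p p (- r))"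

definition f_p :: "real \<Rightarrow> (nat \<Rightarrow> nat \<Rightarrow> real) \<Rightarrow> nat \<Rightarrow> nat \<Rightarrow> (nat \<Rightarrow> real) \<Rightarrow> real" where
  "f_p p X n d \<beta> = (\<Sum>i<n. g_p p (rowdot X d \<beta> i))"

definition mu_ratio :: "real \<Rightarrow> (nat \<Rightarrow> nat \<Rightarrow> real) \<Rightarrow> nat \<Rightarrow> nat \<Rightarrow> (nat \<Rightarrow> real) \<Rightarrow> ereal" where
  "mu_ratio p X n d \<beta> =
    (let num = (\<Sum>i\<in>{i. i < n \<and> rowdot X d \<beta> i > 0}. \<bar>rowdot X d \<beta> i\<bar> powr p);
         den = (\<Sum>i\<in>{i. i < n \<and> rowdot X d \<beta> i < 0}. \<bar>rowdot X d \<beta> i\<bar> powr p)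
     in if den = 0 then \<infinity> else ereal (num / den))"

definition mu_p :: "real \<Rightarrow> (nat \<Rightarrow> nat \<Rightarrow> real) \<Rightarrow> nat \<Rightarrow> nat \<Rightarrow> ereal" where
  "mu_p p X n d = (SUP \<beta>\<in>{\<beta>. \<exists>j<d. \<beta> j \<noteq> 0}. mu_ratio p X n d \<beta>)"

definition mu_complex :: "real \<Rightarrow> (nat \<Rightarrow> nat \<Rightarrow> real) \<Rightarrow> nat \<Rightarrow> nat \<Rightarrow> real \<Rightarrow> bool" where
  "mu_complex p X n d \<mu> \<longleftrightarrow> mu_p p X n d \<le> ereal \<mu>"

end

theory Submission
  imports Defs "HOL-Real_Asymp.Real_Asymp"
begin

(*
  With I(x) the integral of exp(-|t|^p/p) over (-inf, x] and Z = 2 p^(1/p) Gamma(1/p) / p its total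
  mass, Phi_p = I / Z, so g(r) = -ln (I(-r) / Z) is positive and increasing. Two bounds on g drive
  the proof: g(r) >= c r^p for r > 0, and g(r) >= tau(a) = e^(-a-1) / (p (a+1) Z) whenever
  r >= -(p a)^(1/p), because -ln(1 - u) >= u and the density keeps mass at least tau(a) Z beyond
  (p a)^(1/p). For fixed beta, every row with x_i beta >= -(p a)^(1/p) contributes tau(a) to f; every
  other row has |x_i beta|^p >= p a, and mu-complexity bounds the total of these by mu times the
  positive part, where g >= c r^p. Hence 2 f >= n min(tau(a), c p a / mu), and a = (1 + ln mu) / 2
  makes both terms at least a constant times (1 + ln mu) / mu.
*)

lemma set_integrable_Gamma:
  fixes s :: real
  assumes "0 < s"
  shows "set_integrable lborel {0<..} (\<lambda>t. t powr (s - 1) / exp t)"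
    and "(LBINT t:{0<..}. t powr (s - 1) / exp t) = Gamma s"
proof -
  have indicator_form: "(\<lambda>t. indicator {0<..} t *\<^sub>R (t powr (s - 1) / exp t))
      = (\<lambda>t. indicator {0..} t * t powr (s - 1) / exp t)"
    by (rule ext) (auto simp: indicator_def)
  have "has_bochner_integral lborel (\<lambda>t. indicator {0..} t * t powr (s - 1) / exp t) (Gamma s)"
    using assms
    by (intro has_bochner_integral_nn_integral)
       (auto simp: Gamma_conv_nn_integral_real Gamma_real_pos less_imp_le)
  then show "set_integrable lborel {0<..} (\<lambda>t. t powr (s - 1) / exp t)"
    and "(LBINT t:{0<..}. t powr (s - 1) / exp t) = Gamma s"
    unfolding set_integrable_def set_lebesgue_integral_def indicator_form
    by (simp_all add: has_bochner_integral_iff)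
qed

lemma set_integrable_exp_neg_powr:
  fixes p q :: real
  assumes p: "0 < p" and q: "0 < q"
  shows "set_integrable lborel {0<..} (\<lambda>x. exp (- q * x powr p))"
    and "(LBINT x:{0<..}. exp (- q * x powr p)) = q powr (-1/p) / p * Gamma (1/p)"
proof -
  \<comment> \<open>substitute \<open>x = (t/q) powr (1/p)\<close>, which turns the integrand into that of \<open>Gamma (1/p)\<close>\<close>
  define f where "f = (\<lambda>x::real. exp (- q * x powr p))"
  define g where "g = (\<lambda>t::real. (t/q) powr (1/p))"
  define g' where "g' = (\<lambda>t::real. (t/q) powr (1/p - 1) / (p*q))"
  define c where "c = q powr (-1/p) / p"
  have fg: "f (g t) * g' t = c * (t powr (1/p - 1) / exp t)" if t: "0 < t" for t
  proof -
    have f_g: "f (g t) = exp (- t)"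
      using t q p by (simp add: f_def g_def powr_powr)
    have "q powr (1/p - 1) * q = q powr (1/p)"
      using q powr_add[of q "1/p - 1" 1] by simp
    then have "g' t = t powr (1/p - 1) * q powr (-1/p) / p"
      using t q p by (simp add: g'_def powr_divide powr_minus field_simps)
    then show ?thesis
      unfolding f_g by (simp add: c_def exp_minus field_simps)
  qed
  have "set_integrable lborel {0<..} (\<lambda>t. c * (t powr (1/p - 1) / exp t))"
    using set_integrable_mult_right[OF set_integrable_Gamma(1)[of "1/p"], of c] p by simp
  then have integrable_fg: "set_integrable lborel (einterval 0 \<infinity>) (\<lambda>x. f (g x) * g' x)"
    by (subst set_integrable_cong[where f' = "\<lambda>t. c * (t powr (1/p - 1) / exp t)"])
       (auto simp: fg zero_ereal_def)
  have deriv: "DERIV g x :> g' x" if "0 < ereal x" for x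
    using that q p unfolding g_def g'_def
    by (auto intro!: derivative_eq_intros simp: field_simps powr_diff)
  have cont_f: "isCont f (g x)" if "0 < ereal x" for x
    using that q p unfolding f_def g_def by (auto intro!: continuous_intros)
  have cont_g': "isCont g' x" if "0 < ereal x" for x
    using that q p unfolding g'_def by (auto intro!: continuous_intros)
  have "(g \<longlongrightarrow> 0) (at_right 0)"
    unfolding g_def using p q
    by (intro tendsto_zero_powrI[where b="1/p"])
       (auto intro!: tendsto_eq_intros eventually_at_rightI[of 0 1])
  then have lim_bot: "((ereal \<circ> g \<circ> real_of_ereal) \<longlongrightarrow> 0) (at_right 0)"
    by (simp add: zero_ereal_def ereal_tendsto_simps)
  have "filterlim g at_top at_top"
    unfolding g_def using p q
    by real_asymp
  then have lim_top: "((ereal \<circ> g \<circ> real_of_ereal) \<longlongrightarrow> \<infinity>) (at_left \<infinity>)"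
    by (simp add: ereal_tendsto_simps)
  note subst = interval_integral_substitution_nonneg[of 0 \<infinity> g g' f 0 \<infinity>,
      OF _ deriv cont_f cont_g' _ _ lim_bot lim_top integrable_fg]
  show "set_integrable lborel {0<..} (\<lambda>x. exp (- q * x powr p))"
    using subst(1) q p by (simp add: zero_ereal_def f_def g'_def)
  have "(LBINT x:{0<..}. f x) = (LBINT x=0..\<infinity>. f (g x) * g' x)"
    using subst(2) q p interval_integral_to_infinity_eq[where a=0 and M=lborel and f=f]
    by (simp add: zero_ereal_def f_def g'_def)
  also have "\<dots> = (LBINT x:{0<..}. c * (x powr (1/p - 1) / exp x))"
    using interval_integral_to_infinity_eq[where a=0 and M=lborel and f="\<lambda>x. f (g x) * g' x"]
    by (simp add: zero_ereal_def set_lebesgue_integral_cong fg)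
  also have "\<dots> = c * Gamma (1/p)"
    using set_integrable_Gamma(2)[of "1/p"] p by (simp only: set_integral_mult_right) simp
  finally show "(LBINT x:{0<..}. exp (- q * x powr p)) = q powr (-1/p) / p * Gamma (1/p)"
    by (simp add: f_def c_def)
qed

lemma integrable_exp_neg_abs_powr:
  fixes p q :: real
  assumes p: "0 < p" and q: "0 < q"
  shows "integrable lborel (\<lambda>x. exp (- q * \<bar>x\<bar> powr p))"
    and "(\<integral>x. exp (- q * \<bar>x\<bar> powr p) \<partial>lborel) = 2 * (q powr (-1/p) / p * Gamma (1/p))"
proof -
  define h where "h = (\<lambda>x::real. exp (- q * \<bar>x\<bar> powr p))"
  define v where "v = q powr (-1/p) / p * Gamma (1/p)"
  have right_half: "(\<lambda>x. indicator {0<..} x * h x) = (\<lambda>x. indicator {0<..} x *\<^sub>R exp (- q * x powr p))"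
    by (auto simp: h_def indicator_def)
  have right_int: "integrable lborel (\<lambda>x. indicator {0<..} x * h x)"
    and right_val: "(\<integral>x. indicator {0<..} x * h x \<partial>lborel) = v"
    using set_integrable_exp_neg_powr[OF p q]
    unfolding right_half set_integrable_def set_lebesgue_integral_def v_def by simp_all
  have mirror: "(\<lambda>x. indicator {..<0} (- x) * h (- x)) = (\<lambda>x. indicator {0<..} x * h x)"
    by (auto simp: h_def indicator_def)
  have left_int: "integrable lborel (\<lambda>x. indicator {..<0} x * h x)"
    using lborel_integrable_real_affine_iff[of "-1" "\<lambda>x. indicator {..<0} x * h x" 0] right_int mirror
    by simp
  have left_val: "(\<integral>x. indicator {..<0} x * h x \<partial>lborel) = v"
    using lborel_integral_real_affine[of "-1" "\<lambda>x. indicator {..<0} x * h x" 0] right_val mirror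
    by simp
  have ae: "AE x in lborel. h x = indicator {..<0} x * h x + indicator {0<..} x * h x"
    using AE_lborel_singleton[of 0] by eventually_elim (auto simp: indicator_def)
  show "integrable lborel (\<lambda>x. exp (- q * \<bar>x\<bar> powr p))"
    unfolding h_def[symmetric] using left_int right_int ae
    by (intro integrable_cong_AE_imp[OF Bochner_Integration.integrable_add[OF left_int right_int]])
       (auto simp: h_def)
  have "(\<integral>x. h x \<partial>lborel) = (\<integral>x. indicator {..<0} x * h x + indicator {0<..} x * h x \<partial>lborel)"
    using ae by (intro integral_cong_AE) (auto simp: h_def)
  also have "\<dots> = 2 * v"
    using left_int right_int left_val right_val by simp
  finally show "(\<integral>x. exp (- q * \<bar>x\<bar> powr p) \<partial>lborel) = 2 * (q powr (-1/p) / p * Gamma (1/p))"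
    by (simp add: h_def v_def)
qed

definition gen_gauss :: "real \<Rightarrow> real \<Rightarrow> real" where
  "gen_gauss p t = exp (- (\<bar>t\<bar> powr p) / p)"

definition gen_gauss_below :: "real \<Rightarrow> real \<Rightarrow> real" where
  "gen_gauss_below p x = (LBINT t:{..x}. gen_gauss p t)"

definition gen_gauss_mass :: "real \<Rightarrow> real" where
  "gen_gauss_mass p = (\<integral>t. gen_gauss p t \<partial>lborel)"

lemma gen_gauss_pos [simp]: "0 < gen_gauss p t"
  by (simp add: gen_gauss_def)

lemma gen_gauss_antimono:
  assumes "0 < p" "\<bar>t\<bar> \<le> \<bar>u\<bar>"
  shows "gen_gauss p u \<le> gen_gauss p t"
proof -
  have "\<bar>t\<bar> powr p \<le> \<bar>u\<bar> powr p"
    using assms by (intro powr_mono2) auto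
  then show ?thesis
    using assms unfolding gen_gauss_def by (simp add: divide_right_mono)
qed

lemma gen_gauss_eq_exp_neg_abs_powr: "gen_gauss p = (\<lambda>t. exp (- (1/p) * \<bar>t\<bar> powr p))"
  by (simp add: gen_gauss_def fun_eq_iff)

lemma integrable_gen_gauss: "0 < p \<Longrightarrow> integrable lborel (gen_gauss p)"
  unfolding gen_gauss_eq_exp_neg_abs_powr by (rule integrable_exp_neg_abs_powr) simp_all

lemma set_integrable_gen_gauss: "0 < p \<Longrightarrow> A \<in> sets borel \<Longrightarrow> set_integrable lborel A (gen_gauss p)"
  unfolding set_integrable_def by (intro integrable_mult_indicator integrable_gen_gauss) simp_all

lemma gen_gauss_mass_eq: "0 < p \<Longrightarrow> gen_gauss_mass p = 2 * (p powr (1/p) / p * Gamma (1/p))"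
  unfolding gen_gauss_mass_def gen_gauss_eq_exp_neg_abs_powr
  by (subst integrable_exp_neg_abs_powr(2)) (simp_all add: powr_minus_divide powr_divide)

lemma Phi_p_eq:
  assumes "0 < p"
  shows "Phi_p p x = gen_gauss_below p x / gen_gauss_mass p"
proof -
  have "p powr (1 - 1/p) = p / p powr (1/p)"
    using assms by (simp add: powr_diff)
  moreover have "(LBINT t:{..x}. exp (- (\<bar>t\<bar> powr p) / p)) = gen_gauss_below p x"
    by (simp add: gen_gauss_below_def gen_gauss_def)
  moreover have "0 < Gamma (1/p)"
    using assms by (simp add: Gamma_real_pos)
  ultimately show ?thesis
    using assms unfolding Phi_p_def gen_gauss_mass_eq[OF assms] by (simp add: mult_ac)
qed

lemma set_integral_gen_gauss_nonneg: "0 \<le> (LBINT t:A. gen_gauss p t)"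
  unfolding set_lebesgue_integral_def
  by (intro integral_nonneg_AE) (auto simp: less_imp_le)

lemma gen_gauss_below_add:
  assumes "0 < p" "x \<le> y"
  shows "gen_gauss_below p y = gen_gauss_below p x + (LBINT t:{x<..y}. gen_gauss p t)"
proof -
  have "{..y} = {..x} \<union> {x<..y}"
    using assms by auto
  then show ?thesis
    unfolding gen_gauss_below_def
    using assms by (simp only:) (rule set_integral_Un; auto simp: set_integrable_gen_gauss)
qed

lemma gen_gauss_mass_split:
  assumes "0 < p"
  shows "gen_gauss_mass p = gen_gauss_below p x + (LBINT t:{x<..}. gen_gauss p t)"
proof -
  have "{..x} \<union> {x<..} = UNIV"
    by auto
  then have "gen_gauss_mass p = (LBINT t:{..x} \<union> {x<..}. gen_gauss p t)"
    by (simp add: gen_gauss_mass_def set_lebesgue_integral_def)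
  then show ?thesis
    unfolding gen_gauss_below_def
    using assms by (simp only:) (rule set_integral_Un; auto simp: set_integrable_gen_gauss)
qed

lemma set_integral_gen_gauss_ge:
  assumes "0 < p" "x \<le> y"
  shows "(y - x) * gen_gauss p (max \<bar>x\<bar> \<bar>y\<bar>) \<le> (LBINT t:{x<..y}. gen_gauss p t)"
proof -
  let ?m = "gen_gauss p (max \<bar>x\<bar> \<bar>y\<bar>)"
  have "set_integrable lborel {x<..y} (\<lambda>_. ?m)"
    using assms unfolding set_integrable_def by (simp add: integrable_real_indicator)
  then have "(LBINT t:{x<..y}. ?m) \<le> (LBINT t:{x<..y}. gen_gauss p t)"
    using assms by (intro set_integral_mono set_integrable_gen_gauss gen_gauss_antimono) auto
  then show ?thesis
    using assms by (simp add: set_integral_const)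
qed

lemma gen_gauss_below_pos:
  assumes "0 < p"
  shows "0 < gen_gauss_below p x"
proof -
  have "0 < (LBINT t:{x-1<..x}. gen_gauss p t)"
    using set_integral_gen_gauss_ge[OF assms, of "x - 1" x] by (simp add: less_le_trans[OF gen_gauss_pos])
  moreover have "0 \<le> gen_gauss_below p (x - 1)"
    unfolding gen_gauss_below_def by (rule set_integral_gen_gauss_nonneg)
  ultimately show ?thesis
    using gen_gauss_below_add[OF assms, of "x - 1" x] by simp
qed

lemma gen_gauss_below_mono: "0 < p \<Longrightarrow> x \<le> y \<Longrightarrow> gen_gauss_below p x \<le> gen_gauss_below p y"
  using gen_gauss_below_add set_integral_gen_gauss_nonneg by fastforce

lemma gen_gauss_below_less_mass:
  assumes "0 < p"
  shows "gen_gauss_below p x < gen_gauss_mass p"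
proof -
  have "0 < (LBINT t:{x<..x+1}. gen_gauss p t)"
    using set_integral_gen_gauss_ge[OF assms, of x "x + 1"] by (simp add: less_le_trans[OF gen_gauss_pos])
  then have "gen_gauss_below p x < gen_gauss_below p (x + 1)"
    using gen_gauss_below_add[OF assms, of x "x + 1"] by simp
  also have "\<dots> \<le> gen_gauss_mass p"
    using gen_gauss_mass_split[OF assms, of "x + 1"] set_integral_gen_gauss_nonneg by simp
  finally show ?thesis .
qed

lemma gen_gauss_mass_pos: "0 < p \<Longrightarrow> 0 < gen_gauss_mass p"
  using gen_gauss_below_pos gen_gauss_below_less_mass by (metis order.strict_trans)

lemma g_p_eq: "0 < p \<Longrightarrow> g_p p r = - ln (gen_gauss_below p (- r) / gen_gauss_mass p)"
  by (simp add: g_p_def Phi_p_eq)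

lemma g_p_ge_neg_ln:
  assumes "0 < p" "gen_gauss_below p (- r) \<le> Y"
  shows "- ln (Y / gen_gauss_mass p) \<le> g_p p r"
proof -
  have "ln (gen_gauss_below p (- r) / gen_gauss_mass p) \<le> ln (Y / gen_gauss_mass p)"
    using assms gen_gauss_below_pos[OF assms(1)] gen_gauss_mass_pos[OF assms(1)]
    by (intro ln_mono divide_right_mono) (auto intro: less_le_trans)
  then show ?thesis
    using assms by (simp add: g_p_eq)
qed

lemma g_p_pos: "0 < p \<Longrightarrow> 0 < g_p p r"
  using gen_gauss_below_pos gen_gauss_below_less_mass gen_gauss_mass_pos by (simp add: g_p_eq)

lemma g_p_mono: "0 < p \<Longrightarrow> r \<le> s \<Longrightarrow> g_p p r \<le> g_p p s"
  using g_p_ge_neg_ln gen_gauss_below_mono g_p_eq by (metis neg_le_iff_le)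

lemma gen_gauss_below_neg_le:
  assumes p: "0 < p" and r: "0 \<le> r"
  shows "gen_gauss_below p (- r) \<le> 2 powr (1/p) * exp (- (r powr p) / (2*p)) * gen_gauss_mass p"
proof -
  \<comment> \<open>half of the exponent gives the decay factor, the other half still has finite mass\<close>
  define E where "E = exp (- (r powr p) / (2*p))"
  define h where "h = (\<lambda>s::real. exp (- (1 / (2*p)) * \<bar>s\<bar> powr p))"
  have h_int: "integrable lborel h"
    unfolding h_def using p by (intro integrable_exp_neg_abs_powr) simp_all
  have [measurable]: "h \<in> borel_measurable borel"
    unfolding h_def by measurable
  have "(\<integral>s. h s \<partial>lborel) = 2 * ((2*p) powr (1/p) / p * Gamma (1/p))"
    unfolding h_def using p
    by (subst integrable_exp_neg_abs_powr(2)) (simp_all add: powr_minus_divide powr_divide)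
  then have h_mass: "(\<integral>s. h s \<partial>lborel) = 2 powr (1/p) * gen_gauss_mass p"
    using p by (simp add: gen_gauss_mass_eq powr_mult)
  have split: "gen_gauss p s \<le> E * h s" if "s \<le> - r" for s
  proof -
    have "r powr p \<le> \<bar>s\<bar> powr p"
      using that r p by (intro powr_mono2) auto
    then have "- (\<bar>s\<bar> powr p) / p \<le> - (r powr p) / (2*p) + - (1 / (2*p)) * \<bar>s\<bar> powr p"
      using p by (simp add: field_simps)
    then show ?thesis
      unfolding gen_gauss_def E_def h_def by (simp flip: exp_add)
  qed
  have h_set_int: "set_integrable lborel {..-r} h"
    unfolding set_integrable_def using h_int by (intro integrable_mult_indicator) auto
  have "gen_gauss_below p (- r) \<le> (LBINT s:{..-r}. E * h s)"
    unfolding gen_gauss_below_def using p split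
    by (intro set_integral_mono set_integrable_gen_gauss set_integrable_mult_right h_set_int) auto
  also have "\<dots> = E * (LBINT s:{..-r}. h s)"
    by simp
  also have "(LBINT s:{..-r}. h s) \<le> (\<integral>s. h s \<partial>lborel)"
    unfolding set_lebesgue_integral_def using h_int
    by (intro integral_mono integrable_mult_indicator) (auto simp: h_def indicator_def)
  finally show ?thesis
    using h_mass by (simp add: E_def mult_ac)
qed

lemma g_p_ge_powr_minus_const:
  assumes "0 < p" "0 \<le> r"
  shows "r powr p / (2*p) - ln 2 / p \<le> g_p p r"
proof -
  have "- ln (2 powr (1/p) * exp (- (r powr p) / (2*p)) * gen_gauss_mass p / gen_gauss_mass p) \<le> g_p p r"
    using assms by (intro g_p_ge_neg_ln gen_gauss_below_neg_le)
  then show ?thesis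
    using assms gen_gauss_mass_pos[OF assms(1)] by (simp add: ln_mult ln_powr)
qed

lemma ex_linear_lower_bound:
  fixes \<gamma> k B :: real
  assumes "0 < \<gamma>" "0 < k"
  shows "\<exists>c>0. \<forall>s h. 0 \<le> s \<longrightarrow> \<gamma> \<le> h \<longrightarrow> k * s - B \<le> h \<longrightarrow> c * s \<le> h"
proof -
  define B' where "B' = max 0 B"
  define c where "c = min (k / 2) (\<gamma> * k / (2 * B' + k))"
  have B': "0 \<le> B'" "B \<le> B'"
    by (simp_all add: B'_def)
  have c: "c \<le> k / 2" "c \<le> \<gamma> * k / (2 * B' + k)"
    unfolding c_def by (rule min.cobounded1, rule min.cobounded2)
  have "c * s \<le> h" if s: "0 \<le> s" and h: "\<gamma> \<le> h" "k * s - B \<le> h" for s h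
  proof (cases "2 * B' \<le> k * s")
    case True
    have "c * s \<le> k / 2 * s"
      using s c by (intro mult_right_mono)
    then show ?thesis
      using True h B' by linarith
  next
    case False
    have "c * s \<le> \<gamma> * k / (2 * B' + k) * s"
      using s c by (intro mult_right_mono)
    also have "\<dots> = \<gamma> * ((k * s) / (2 * B' + k))"
      by simp
    also have "\<dots> \<le> \<gamma> * 1"
      using False assms B' by (intro mult_left_mono) (auto simp: divide_le_eq_1_pos)
    also have "\<dots> = \<gamma>"
      by simp
    finally show ?thesis
      using h by linarith
  qed
  moreover have "0 < c"
    using assms B' by (simp add: c_def)
  ultimately show ?thesis
    by blast
qed

lemma g_p_ge_powr:
  assumes "0 < p"
  shows "\<exists>c>0. \<forall>r>0. c * r powr p \<le> g_p p r"
proof -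
  obtain c where "0 < c"
    and c: "\<And>s h. 0 \<le> s \<Longrightarrow> g_p p 0 \<le> h \<Longrightarrow> 1 / (2*p) * s - ln 2 / p \<le> h \<Longrightarrow> c * s \<le> h"
    using ex_linear_lower_bound[OF g_p_pos[OF assms, of 0], of "1 / (2*p)" "ln 2 / p"] assms by auto
  have "c * r powr p \<le> g_p p r" if "0 < r" for r
    using that assms g_p_mono[OF assms, of 0 r] g_p_ge_powr_minus_const[OF assms, of r]
    by (intro c) auto
  then show ?thesis
    using \<open>0 < c\<close> by blast
qed

lemma powr_inverse_diff_ge:
  fixes p u v :: real
  assumes p: "1 \<le> p" and uv: "0 < u" "u \<le> v" "1 \<le> v"
  shows "(v - u) / (p * v) \<le> v powr (1/p) - u powr (1/p)"
proof -
  define T where "T = u powr (1/p)"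
  define X where "X = v powr (1/p)"
  have T: "0 < T" "T powr p = u" and X: "1 \<le> X" "X powr p = v"
    using p uv by (simp_all add: T_def X_def powr_powr ge_one_powr_ge_zero)
  have "(p * X powr (p - 1)) * (T - X) \<le> T powr p - X powr p"
    using T X p
    by (intro convex_on_imp_above_tangent[where A = "{0<..}"] powr_convex)
       (auto intro!: derivative_eq_intros simp: interior_open)
  moreover have "X powr (p - 1) \<le> v"
    using X p uv by (simp add: powr_diff divide_le_eq mult_le_cancel_left1)
  moreover have "T \<le> X"
    using p uv by (simp add: T_def X_def powr_mono2)
  ultimately have "v - u \<le> p * X powr (p - 1) * (X - T)"
    using T X by (simp add: algebra_simps)
  also have "\<dots> \<le> p * v * (X - T)"
    using \<open>X powr (p - 1) \<le> v\<close> \<open>T \<le> X\<close> p by (intro mult_right_mono mult_left_mono) auto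
  finally show ?thesis
    using p uv by (simp add: T_def X_def divide_le_eq mult_ac)
qed

lemma gen_gauss_upper_tail_ge:
  assumes "0 < p" "0 \<le> T" "T \<le> X"
  shows "(X - T) * gen_gauss p X \<le> gen_gauss_mass p - gen_gauss_below p T"
proof -
  have "(X - T) * gen_gauss p X \<le> (LBINT t:{T<..X}. gen_gauss p t)"
    using set_integral_gen_gauss_ge[OF assms(1,3)] assms by (simp add: max_def)
  also have "\<dots> \<le> gen_gauss_mass p - gen_gauss_below p T"
    using gen_gauss_below_add[OF assms(1,3)] gen_gauss_below_less_mass[OF assms(1), of X] by simp
  finally show ?thesis .
qed

lemma g_p_ge_upper_tail:
  assumes "0 < p"
  shows "(gen_gauss_mass p - gen_gauss_below p (- r)) / gen_gauss_mass p \<le> g_p p r"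
proof -
  have "ln (gen_gauss_below p (- r) / gen_gauss_mass p) \<le> gen_gauss_below p (- r) / gen_gauss_mass p - 1"
    using gen_gauss_below_pos[OF assms] gen_gauss_mass_pos[OF assms] by (intro ln_le_minus_one) simp
  then show ?thesis
    using gen_gauss_mass_pos[OF assms] by (simp add: g_p_eq[OF assms] diff_divide_distrib)
qed

lemma g_p_tail_bound:
  assumes p: "1 \<le> p" and a: "0 < a" and r: "- ((p * a) powr (1/p)) \<le> r"
  shows "exp (- a - 1) / (p * (a + 1) * gen_gauss_mass p) \<le> g_p p r"
proof -
  define T where "T = (p * a) powr (1/p)"
  define X where "X = (p * (a + 1)) powr (1/p)"
  define Z where "Z = gen_gauss_mass p"
  have p0: "0 < p" and Z: "0 < Z"
    using p gen_gauss_mass_pos[of p] by (simp_all add: Z_def)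
  have TX: "0 < T" "T \<le> X"
    using p a by (simp_all add: T_def X_def powr_mono2)
  have "1 \<le> p * (a + 1)"
    using mult_mono[of 1 p 1 "a + 1"] p a by simp
  then have "(p * (a + 1) - p * a) / (p * (p * (a + 1))) \<le> X - T"
    unfolding T_def X_def using p a by (intro powr_inverse_diff_ge) simp_all
  moreover have "(p * (a + 1) - p * a) / (p * (p * (a + 1))) = 1 / (p * (a + 1))"
  proof -
    have "p * (a + 1) - p * a = p"
      by (simp add: algebra_simps)
    then show ?thesis
      using p0 by simp
  qed
  ultimately have gap: "1 / (p * (a + 1)) \<le> X - T"
    by simp
  have X: "gen_gauss p X = exp (- a - 1)"
    using p0 a by (simp add: gen_gauss_def X_def powr_powr)
  have "exp (- a - 1) / (p * (a + 1) * Z) = 1 / (p * (a + 1)) * gen_gauss p X / Z"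
    by (simp add: X)
  also have "\<dots> \<le> (X - T) * gen_gauss p X / Z"
    using gap Z less_imp_le[OF gen_gauss_pos[of p X]] by (intro divide_right_mono mult_right_mono) auto
  also have "\<dots> \<le> (Z - gen_gauss_below p T) / Z"
    using gen_gauss_upper_tail_ge[OF p0 _ TX(2)] TX Z by (intro divide_right_mono) (simp_all add: Z_def)
  also have "\<dots> \<le> g_p p (- T)"
    using g_p_ge_upper_tail[OF p0, of "- T"] by (simp add: Z_def)
  also have "\<dots> \<le> g_p p r"
    using r by (intro g_p_mono[OF p0]) (simp add: T_def)
  finally show ?thesis
    by (simp add: Z_def)
qed

definition pos_mass :: "real \<Rightarrow> (nat \<Rightarrow> nat \<Rightarrow> real) \<Rightarrow> nat \<Rightarrow> nat \<Rightarrow> (nat \<Rightarrow> real) \<Rightarrow> real" where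
  "pos_mass p X n d \<beta> = (\<Sum>i\<in>{i. i < n \<and> rowdot X d \<beta> i > 0}. \<bar>rowdot X d \<beta> i\<bar> powr p)"

definition neg_mass :: "real \<Rightarrow> (nat \<Rightarrow> nat \<Rightarrow> real) \<Rightarrow> nat \<Rightarrow> nat \<Rightarrow> (nat \<Rightarrow> real) \<Rightarrow> real" where
  "neg_mass p X n d \<beta> = (\<Sum>i\<in>{i. i < n \<and> rowdot X d \<beta> i < 0}. \<bar>rowdot X d \<beta> i\<bar> powr p)"

lemma mu_ratio_eq:
  "mu_ratio p X n d \<beta> =
    (if neg_mass p X n d \<beta> = 0 then \<infinity> else ereal (pos_mass p X n d \<beta> / neg_mass p X n d \<beta>))"
  by (simp add: mu_ratio_def pos_mass_def neg_mass_def)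

lemma rowdot_uminus: "rowdot X d (\<lambda>j. - \<beta> j) i = - rowdot X d \<beta> i"
  by (simp add: rowdot_def sum_negf)

lemma neg_mass_uminus: "neg_mass p X n d (\<lambda>j. - \<beta> j) = pos_mass p X n d \<beta>"
  by (simp add: neg_mass_def pos_mass_def rowdot_uminus)

lemma pos_mass_uminus: "pos_mass p X n d (\<lambda>j. - \<beta> j) = neg_mass p X n d \<beta>"
  by (simp add: neg_mass_def pos_mass_def rowdot_uminus)

lemma neg_mass_nonneg: "0 \<le> neg_mass p X n d \<beta>"
  by (simp add: neg_mass_def sum_nonneg)

lemma mu_complex_pos_mass_le:
  assumes "mu_complex p X n d \<mu>" "\<exists>j<d. \<beta> j \<noteq> 0"
  shows "0 < neg_mass p X n d \<beta>" "pos_mass p X n d \<beta> \<le> \<mu> * neg_mass p X n d \<beta>"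
proof -
  have "mu_ratio p X n d \<beta> \<le> mu_p p X n d"
    unfolding mu_p_def using assms(2) by (intro SUP_upper) auto
  also have "\<dots> \<le> ereal \<mu>"
    using assms(1) by (simp add: mu_complex_def)
  finally have "neg_mass p X n d \<beta> \<noteq> 0" "pos_mass p X n d \<beta> / neg_mass p X n d \<beta> \<le> \<mu>"
    by (simp_all add: mu_ratio_eq split: if_splits)
  then show "0 < neg_mass p X n d \<beta>" "pos_mass p X n d \<beta> \<le> \<mu> * neg_mass p X n d \<beta>"
    using neg_mass_nonneg[of p X n d \<beta>] by (simp_all add: divide_le_eq mult.commute)
qed

lemma mu_complex_ge_one:
  assumes "0 < d" "mu_complex p X n d \<mu>"
  shows "1 \<le> \<mu>"
proof (rule ccontr)
  assume "\<not> 1 \<le> \<mu>"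
  define P where "P = pos_mass p X n d (\<lambda>_. 1)"
  define N where "N = neg_mass p X n d (\<lambda>_. 1)"
  have "0 < N" "P \<le> \<mu> * N"
    using mu_complex_pos_mass_le[OF assms(2), of "\<lambda>_. 1"] assms(1) by (auto simp: P_def N_def)
  moreover have "0 < P" "N \<le> \<mu> * P"
    using mu_complex_pos_mass_le[OF assms(2), of "\<lambda>_. - 1"] assms(1)
    by (auto simp: P_def N_def neg_mass_uminus[of p X n d "\<lambda>_. 1", simplified]
                   pos_mass_uminus[of p X n d "\<lambda>_. 1", simplified])
  ultimately have "P < N" "N < P"
    using \<open>\<not> 1 \<le> \<mu>\<close> mult_strict_right_mono[of \<mu> 1 N] mult_strict_right_mono[of \<mu> 1 P]
    by linarith+
  then show False
    by simp
qed

lemma mu_complex_neg_mass_le: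
  assumes "mu_complex p X n d \<mu>"
  shows "neg_mass p X n d \<beta> \<le> \<mu> * pos_mass p X n d \<beta>"
proof (cases "\<exists>j<d. \<beta> j \<noteq> 0")
  case True
  then show ?thesis
    using mu_complex_pos_mass_le(2)[OF assms, of "\<lambda>j. - \<beta> j"]
    by (simp add: neg_mass_uminus pos_mass_uminus)
next
  case False
  then have "rowdot X d \<beta> i = 0" for i
    by (simp add: rowdot_def)
  then show ?thesis
    by (simp add: neg_mass_def pos_mass_def)
qed

lemma sum_ge_by_sign_balance:
  fixes h :: "real \<Rightarrow> real" and r :: "'a \<Rightarrow> real"
  assumes A: "finite A" and p: "0 \<le> p" and t: "0 \<le> t" and \<mu>: "0 < \<mu>" and c: "0 \<le> c"
    and h_nonneg: "\<And>x. 0 \<le> h x"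
    and h_above: "\<And>x. - t \<le> x \<Longrightarrow> \<tau> \<le> h x"
    and h_pos: "\<And>x. 0 < x \<Longrightarrow> c * x powr p \<le> h x"
    and balance: "(\<Sum>i\<in>{i\<in>A. r i < 0}. \<bar>r i\<bar> powr p) \<le> \<mu> * (\<Sum>i\<in>{i\<in>A. 0 < r i}. \<bar>r i\<bar> powr p)"
  shows "real (card A) * min \<tau> (c * t powr p / \<mu>) \<le> 2 * (\<Sum>i\<in>A. h (r i))"
proof -
  \<comment> \<open>a row below \<open>-t\<close> has negative mass at least \<open>t powr p\<close>, which the balance trades for positive mass\<close>
  define m where "m = min \<tau> (c * t powr p / \<mu>)"
  define pos where "pos = (\<lambda>x::real. if 0 < x then \<bar>x\<bar> powr p else 0)"
  define neg where "neg = (\<lambda>x::real. if x < 0 then \<bar>x\<bar> powr p else 0)"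
  define above where "above = (\<lambda>x::real. if - t \<le> x then 1 else 0 :: real)"
  have lower: "m \<le> \<tau> * above x + c / \<mu> * neg x" for x
  proof (cases "- t \<le> x")
    case True
    have "m \<le> \<tau>" "0 \<le> c / \<mu> * neg x"
      using c \<mu> by (simp_all add: m_def neg_def)
    then show ?thesis
      using True by (simp add: above_def)
  next
    case False
    then have "c / \<mu> * t powr p \<le> c / \<mu> * neg x"
      using c \<mu> t p by (intro mult_left_mono) (auto simp: neg_def intro: powr_mono2)
    then show ?thesis
      using False by (simp add: m_def above_def)
  qed
  have upper: "\<tau> * above x + c * pos x \<le> 2 * h x" for x
    using h_nonneg[of x] h_above[of x] h_pos[of x] t
    by (cases "0 < x"; cases "- t \<le> x") (auto simp: above_def pos_def)
  have "(\<Sum>i\<in>A. neg (r i)) \<le> \<mu> * (\<Sum>i\<in>A. pos (r i))"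
    unfolding neg_def pos_def sum.inter_filter[OF A, symmetric] by (rule balance)
  then have neg_le_pos: "c / \<mu> * (\<Sum>i\<in>A. neg (r i)) \<le> c * (\<Sum>i\<in>A. pos (r i))"
    using c \<mu> mult_left_mono[of _ _ "c / \<mu>"] by fastforce
  have "real (card A) * m = (\<Sum>i\<in>A. m)"
    by simp
  also have "\<dots> \<le> (\<Sum>i\<in>A. \<tau> * above (r i) + c / \<mu> * neg (r i))"
    by (intro sum_mono lower)
  also have "\<dots> = \<tau> * (\<Sum>i\<in>A. above (r i)) + c / \<mu> * (\<Sum>i\<in>A. neg (r i))"
    by (simp add: sum.distrib sum_distrib_left)
  also have "\<dots> \<le> \<tau> * (\<Sum>i\<in>A. above (r i)) + c * (\<Sum>i\<in>A. pos (r i))"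
    using neg_le_pos by simp
  also have "\<dots> = (\<Sum>i\<in>A. \<tau> * above (r i) + c * pos (r i))"
    by (simp add: sum.distrib sum_distrib_left)
  also have "\<dots> \<le> 2 * (\<Sum>i\<in>A. h (r i))"
    unfolding sum_distrib_left by (intro sum_mono upper)
  finally show ?thesis
    by (simp add: m_def)
qed

lemma f_p_ge_min:
  assumes p: "1 \<le> p" and c: "0 \<le> c" "\<And>r. 0 < r \<Longrightarrow> c * r powr p \<le> g_p p r"
    and mc: "0 < d" "mu_complex p X n d \<mu>" and a: "0 < a"
  shows "real n * min (exp (- a - 1) / (p * (a + 1) * gen_gauss_mass p)) (c * (p * a) / \<mu>)
           \<le> 2 * f_p p X n d \<beta>"
proof -
  define t where "t = (p * a) powr (1/p)"
  have t: "0 \<le> t" "t powr p = p * a"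
    using p a by (simp_all add: t_def powr_powr)
  have "{i. i < n \<and> P i} = {i\<in>{..<n}. P i}" for P
    by auto
  then have balance: "(\<Sum>i\<in>{i\<in>{..<n}. rowdot X d \<beta> i < 0}. \<bar>rowdot X d \<beta> i\<bar> powr p)
      \<le> \<mu> * (\<Sum>i\<in>{i\<in>{..<n}. 0 < rowdot X d \<beta> i}. \<bar>rowdot X d \<beta> i\<bar> powr p)"
    using mu_complex_neg_mass_le[OF mc(2)] by (simp only: neg_mass_def pos_mass_def)
  have tail: "\<And>x. - t \<le> x \<Longrightarrow> exp (- a - 1) / (p * (a + 1) * gen_gauss_mass p) \<le> g_p p x"
    using g_p_tail_bound[OF p a] by (simp add: t_def)
  have nonneg: "\<And>x. 0 \<le> g_p p x"
    using g_p_pos[of p] p by (simp add: less_imp_le)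
  show ?thesis
    using sum_ge_by_sign_balance[OF finite_lessThan _ t(1) _ c(1) nonneg tail c(2) balance]
      mu_complex_ge_one[OF mc] p
    by (simp add: f_p_def t(2))
qed

lemma log_rate_le_tail_bound:
  fixes L p Z :: real
  assumes L: "0 \<le> L" and p: "0 < p" and Z: "0 < Z"
  shows "L / (8 * exp 2 * p * Z * exp (L - 1)) \<le> exp (- (L/2) - 1) / (p * (L/2 + 1) * Z)"
proof -
  have "L * (L + 2) \<le> 16 * (1 + L/4)^2"
    using L by (simp add: power2_eq_square algebra_simps)
  also have "(1 + L/4)^2 \<le> exp (L/4) ^ 2"
    using L by (intro power_mono exp_ge_add_one_self) auto
  also have "exp (L/4) ^ 2 = exp (L/2)"
    by (simp add: power2_eq_square flip: exp_add)
  finally have quad: "L * (L + 2) \<le> 16 * exp (L/2)"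
    by simp
  have "exp 2 * exp (L - 1) = exp (L/2) * exp (L/2 + 1)"
    by (simp flip: exp_add)
  then have "L / (8 * exp 2 * p * Z * exp (L - 1))
      = L * (L + 2) / (8 * exp (L/2) * exp (L/2 + 1) * p * Z * (L + 2))"
    using L by (simp add: mult_ac)
  also have "\<dots> \<le> 16 * exp (L/2) / (8 * exp (L/2) * exp (L/2 + 1) * p * Z * (L + 2))"
    using quad L p Z by (intro divide_right_mono) auto
  also have "\<dots> = 2 / (exp (L/2 + 1) * p * Z * (L + 2))"
    by simp
  also have "\<dots> = exp (- (L/2) - 1) / (p * (L/2 + 1) * Z)"
  proof -
    have "exp (- (L/2) - 1) * exp (L/2 + 1) = 1"
      by (subst exp_add[symmetric]) simp
    then have exp_inverse: "exp (- (L/2) - 1) = 1 / exp (L/2 + 1)"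
      by (simp add: eq_divide_eq)
    show ?thesis
      unfolding exp_inverse using L by (simp add: field_simps)
  qed
  finally show ?thesis .
qed

lemma f_p_ge_log_rate:
  assumes p: "1 \<le> p" and c: "0 < c" "\<And>r. 0 < r \<Longrightarrow> c * r powr p \<le> g_p p r"
    and mc: "0 < d" "mu_complex p X n d \<mu>"
  shows "min (c * p / 4) (1 / (16 * exp 2 * p * gen_gauss_mass p)) * (real n / \<mu>) * (1 + ln \<mu>)
           \<le> f_p p X n d \<beta>"
proof -
  define Z where "Z = gen_gauss_mass p"
  define C where "C = min (c * p / 4) (1 / (16 * exp 2 * p * Z))"
  define L where "L = 1 + ln \<mu>"
  have \<mu>: "1 \<le> \<mu>" and L: "1 \<le> L" and Z: "0 < Z"
    using mu_complex_ge_one[OF mc] p gen_gauss_mass_pos[of p] by (simp_all add: L_def Z_def)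
  have C: "C \<le> c * p / 4" "C \<le> 1 / (16 * exp 2 * p * Z)"
    by (simp_all add: C_def)
  have "2 * C * L / \<mu> \<le> 2 * (1 / (16 * exp 2 * p * Z)) * L / \<mu>"
    using C L \<mu> by (intro divide_right_mono mult_right_mono mult_left_mono) auto
  also have "\<dots> = L / (8 * exp 2 * p * Z * \<mu>)"
    by simp
  also have "\<dots> \<le> exp (- (L/2) - 1) / (p * (L/2 + 1) * Z)"
    using log_rate_le_tail_bound[of L p Z] L \<mu> p Z by (simp add: L_def)
  finally have tail: "2 * C * L / \<mu> \<le> exp (- (L/2) - 1) / (p * (L/2 + 1) * Z)" .
  have "C * (2 * L) \<le> c * p / 4 * (2 * L)"
    using C(1) L by (intro mult_right_mono) auto
  then have powr: "2 * C * L / \<mu> \<le> c * (p * (L/2)) / \<mu>"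
    using \<mu> by (intro divide_right_mono) (simp_all add: algebra_simps)
  have L2: "0 < L/2"
    using L by simp
  have "real n * (2 * C * L / \<mu>) \<le> real n * min (exp (- (L/2) - 1) / (p * (L/2 + 1) * Z)) (c * (p * (L/2)) / \<mu>)"
    using tail powr by (intro mult_left_mono) auto
  also have "\<dots> \<le> 2 * f_p p X n d \<beta>"
    unfolding Z_def by (rule f_p_ge_min[OF p less_imp_le[OF c(1)] c(2) mc L2])
  finally have "real n * (2 * C * L / \<mu>) \<le> 2 * f_p p X n d \<beta>" .
  then have "C * (real n / \<mu>) * L \<le> f_p p X n d \<beta>"
    using \<mu> by (simp add: field_simps)
  then show ?thesis
    by (simp add: C_def Z_def L_def)
qed

theorem lemma3:
  fixes p :: real
  assumes "p \<ge> 1"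
  shows "\<exists>C>0. \<forall>(n::nat) (d::nat) (X::nat \<Rightarrow> nat \<Rightarrow> real) (\<mu>::real) (\<beta>::nat \<Rightarrow> real).
           0 < d \<longrightarrow> mu_complex p X n d \<mu> \<longrightarrow>
           f_p p X n d \<beta> \<ge> C * (real n / \<mu>) * (1 + ln \<mu>)"
proof -
  obtain c where c: "0 < c" "\<And>r. 0 < r \<Longrightarrow> c * r powr p \<le> g_p p r"
    using g_p_ge_powr[of p] assms by auto
  have "0 < min (c * p / 4) (1 / (16 * exp 2 * p * gen_gauss_mass p))"
    using c assms gen_gauss_mass_pos[of p] by simp
  then show ?thesis
    using f_p_ge_log_rate[OF assms c] by blast
qed

end
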